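(* Let $r\ge 3$ and let $\mathcal H=(V,E)$ be an $r$-uniform bi-hypergraph such that $d(v)\le \frac{(r-1)^{r-1}\mathrm{e}^{-1}-2}{r}$ for every $v\in V$, where $\mathrm{e}$ is the base of the natural logarithm. Then $\mathcal H$ is colorable.
   Context: A bi-hypergraph $\mathcal H=(V,E)$ consists of a finite vertex set $V$ and a set $E$ of subsets of $V$, called edges, with no edge contained in another. It is $r$-uniform if every edge has exactly $r$ elements. The degree $d(v)$ of a vertex $v$ is the number of edges containing $v$. A mapping $f:V\to\mathbb N$ is a proper coloring of $\mathcal H$ if $1<|f(e)|<|e|$ for every $e\in E$, where $f(e)=\{f(v):v\in e\}$. $\mathcal H$ is colorable if it has a proper coloring. *)

theory Defs
  imports Complex_Main
begin

definition bi_hypergraph :: "'a set \<Rightarrow> 'a set set \<Rightarrow> bool" where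
  "bi_hypergraph V E \<longleftrightarrow> finite V \<and> (\<forall>e\<in>E. e \<subseteq> V)
     \<and> (\<forall>e\<in>E. \<forall>e'\<in>E. e \<subseteq> e' \<longrightarrow> e = e')"

definition uniform :: "nat \<Rightarrow> 'a set set \<Rightarrow> bool" where
  "uniform r E \<longleftrightarrow> (\<forall>e\<in>E. card e = r)"

definition degree :: "'a set set \<Rightarrow> 'a \<Rightarrow> nat" where
  "degree E v = card {e\<in>E. v \<in> e}"

definition proper_coloring :: "'a set \<Rightarrow> 'a set set \<Rightarrow> ('a \<Rightarrow> nat) \<Rightarrow> bool" where
  "proper_coloring V E f \<longleftrightarrow> (\<forall>e\<in>E. 1 < card (f ` e) \<and> card (f ` e) < card e)"

definition colorable :: "'a set \<Rightarrow> 'a set set \<Rightarrow> bool" where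
  "colorable V E \<longleftrightarrow> (\<exists>f. proper_coloring V E f)"

end

theory Submission imports Defs "HOL-Library.FuncSet" begin

text \<open>Colour with the \<open>r - 1\<close> colours \<open>{0..<r-1}\<close>: no edge can then receive \<open>r\<close> distinct
  colours, so a colouring is proper as soon as no edge is monochromatic. In a uniformly random
  colouring an edge is monochromatic with probability \<open>p = (r-1)^(1-r)\<close>, independently of the
  colours of the edges disjoint from it, and every edge meets at most \<open>d \<le> r\<Delta>\<close> edges. The bound
  on \<open>\<Delta>\<close> gives \<open>e p (d + 1) \<le> 1\<close>, so the symmetric Lov\'asz Local Lemma produces a colouring
  without monochromatic edges. The Local Lemma is used in counting form: probabilities are
  proportions of the finite set of all colourings.\<close>

definition avoiding :: "'w set \<Rightarrow> ('e \<Rightarrow> 'w set) \<Rightarrow> 'e set \<Rightarrow> 'w set" where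
  "avoiding \<Omega> A S = \<Omega> - (\<Union>e\<in>S. A e)"

lemma avoiding_empty [simp]: "avoiding \<Omega> A {} = \<Omega>"
  by (simp add: avoiding_def)

lemma avoiding_antimono: "S \<subseteq> S' \<Longrightarrow> avoiding \<Omega> A S' \<subseteq> avoiding \<Omega> A S"
  by (auto simp: avoiding_def)

lemma card_avoiding_insert:
  assumes "finite \<Omega>"
  shows "card (avoiding \<Omega> A S) = card (avoiding \<Omega> A S \<inter> A e) + card (avoiding \<Omega> A (insert e S))"
proof -
  have "avoiding \<Omega> A (insert e S) = avoiding \<Omega> A S - A e"
    by (auto simp: avoiding_def)
  then show ?thesis
    using assms by (simp add: card_Int_Diff avoiding_def)
qed

lemma card_avoiding_union_ge:
  fixes x :: real
  assumes "finite \<Omega>" "finite T" "x \<le> 1"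
    and "\<And>U f. U \<subseteq> T \<Longrightarrow> f \<in> T \<Longrightarrow> f \<notin> U \<Longrightarrow>
           card (avoiding \<Omega> A (S \<union> U) \<inter> A f) \<le> x * card (avoiding \<Omega> A (S \<union> U))"
  shows "(1 - x) ^ card T * card (avoiding \<Omega> A S) \<le> card (avoiding \<Omega> A (S \<union> T))"
  using assms(2,4)
proof (induction T rule: finite_induct)
  case empty
  then show ?case by simp
next
  case (insert f T)
  let ?X = "avoiding \<Omega> A (S \<union> T)"
  have bound: "card (?X \<inter> A f) \<le> x * card ?X"
    using insert.prems insert.hyps(2) by blast
  have split: "real (card ?X) = card (?X \<inter> A f) + card (avoiding \<Omega> A (S \<union> insert f T))"
    using card_avoiding_insert[OF assms(1), of A "S \<union> T" f] by simp
  have "(1 - x) ^ card (insert f T) * card (avoiding \<Omega> A S)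
          = (1 - x) * ((1 - x) ^ card T * card (avoiding \<Omega> A S))"
    using insert.hyps by simp
  also have "\<dots> \<le> (1 - x) * card ?X"
    using insert.IH insert.prems assms(3) by (intro mult_left_mono) auto
  also have "\<dots> \<le> card (avoiding \<Omega> A (S \<union> insert f T))"
    using bound split by (simp add: algebra_simps)
  finally show ?case .
qed

lemma exp_minus_one_le_power: "exp (-1) \<le> (1 - 1 / (real n + 1)) ^ n"
proof (cases "n = 0")
  case False
  have "(1 + 1 / real n) ^ n \<le> exp 1"
    using False by (intro exp_ge_one_plus_x_over_n_power_n) auto
  then have "inverse (exp 1) \<le> inverse ((1 + 1 / real n) ^ n)"
    by (intro le_imp_inverse_le) (auto simp: add_pos_nonneg)
  moreover have "inverse (1 + 1 / real n) = 1 - 1 / (real n + 1)"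
    using False by (simp add: field_simps)
  ultimately show ?thesis
    by (metis exp_minus power_inverse)
qed simp

text \<open>Outcomes in \<open>\<Omega>\<close> are equally likely, \<open>A e\<close> is the bad event indexed by \<open>e\<close>, and \<open>N e\<close>
  contains the events that \<open>A e\<close> may depend on.\<close>

locale counting_local_lemma =
  fixes \<Omega> :: "'w set" and A :: "'e \<Rightarrow> 'w set" and E :: "'e set"
    and N :: "'e \<Rightarrow> 'e set" and d :: nat and p :: real
  assumes finite_outcomes: "finite \<Omega>"
    and finite_events: "finite E"
    and card_neighbours: "\<And>e. e \<in> E \<Longrightarrow> card (E \<inter> N e) \<le> d"
    and independent: "\<And>e T. e \<in> E \<Longrightarrow> T \<subseteq> E - N e - {e} \<Longrightarrow>
           card (avoiding \<Omega> A T \<inter> A e) \<le> p * card (avoiding \<Omega> A T)"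
begin

text \<open>Split \<open>S\<close> into the neighbours \<open>S\<^sub>1\<close> and the non-neighbours \<open>S\<^sub>2\<close> of \<open>e\<close>: independence
  bounds \<open>A e\<close> by \<open>p\<close> relative to \<open>avoiding S\<^sub>2\<close>, and the induction hypothesis shows that
  \<open>avoiding S\<close> keeps at least the fraction \<open>(1 - x)^|S\<^sub>1|\<close> of \<open>avoiding S\<^sub>2\<close>.\<close>

lemma conditional_bound:
  fixes x :: real
  assumes "0 \<le> x" "x \<le> 1" "p \<le> x * (1 - x) ^ d"
  shows "S \<subseteq> E \<Longrightarrow> e \<in> E \<Longrightarrow> e \<notin> S \<Longrightarrow>
           card (avoiding \<Omega> A S \<inter> A e) \<le> x * card (avoiding \<Omega> A S)"
proof (induction "card S" arbitrary: S e rule: less_induct)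
  case (less S e)
  have "finite S"
    using less.prems(1) finite_events finite_subset by blast
  define S\<^sub>1 where "S\<^sub>1 = S \<inter> N e"
  define S\<^sub>2 where "S\<^sub>2 = S - N e"
  have "card S\<^sub>1 \<le> card (E \<inter> N e)"
    using less.prems(1) finite_events unfolding S\<^sub>1_def by (intro card_mono) auto
  then have card_S\<^sub>1: "card S\<^sub>1 \<le> d"
    using card_neighbours[OF less.prems(2)] by linarith
  have "(1 - x) ^ card S\<^sub>1 * card (avoiding \<Omega> A S\<^sub>2) \<le> card (avoiding \<Omega> A (S\<^sub>2 \<union> S\<^sub>1))"
  proof (rule card_avoiding_union_ge[OF finite_outcomes _ assms(2)])
    show "finite S\<^sub>1"
      using \<open>finite S\<close> by (simp add: S\<^sub>1_def)
    fix U f assume "U \<subseteq> S\<^sub>1" "f \<in> S\<^sub>1" "f \<notin> U"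
    then have "S\<^sub>2 \<union> U \<subset> S" "f \<notin> S\<^sub>2 \<union> U" "f \<in> E"
      using less.prems(1) by (auto simp: S\<^sub>1_def S\<^sub>2_def)
    then show "card (avoiding \<Omega> A (S\<^sub>2 \<union> U) \<inter> A f) \<le> x * card (avoiding \<Omega> A (S\<^sub>2 \<union> U))"
      using less.hyps[OF psubset_card_mono[OF \<open>finite S\<close>]] less.prems(1) by blast
  qed
  moreover have "S\<^sub>2 \<union> S\<^sub>1 = S"
    by (auto simp: S\<^sub>1_def S\<^sub>2_def)
  ultimately have chain: "(1 - x) ^ card S\<^sub>1 * card (avoiding \<Omega> A S\<^sub>2) \<le> card (avoiding \<Omega> A S)"
    by simp
  have "real (card (avoiding \<Omega> A S \<inter> A e)) \<le> card (avoiding \<Omega> A S\<^sub>2 \<inter> A e)"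
    using avoiding_antimono[of S\<^sub>2 S] finite_outcomes
    by (intro of_nat_mono card_mono) (auto simp: S\<^sub>2_def avoiding_def)
  also have "\<dots> \<le> p * card (avoiding \<Omega> A S\<^sub>2)"
    using independent[OF less.prems(2), of S\<^sub>2] less.prems by (auto simp: S\<^sub>2_def)
  also have "\<dots> \<le> x * (1 - x) ^ card S\<^sub>1 * card (avoiding \<Omega> A S\<^sub>2)"
    using assms card_S\<^sub>1 order_trans[OF assms(3) mult_left_mono[OF power_decreasing]]
    by (intro mult_right_mono) auto
  also have "\<dots> \<le> x * card (avoiding \<Omega> A S)"
    using chain assms(1) by (simp add: mult.assoc mult_left_mono)
  finally show ?case .
qed

theorem card_avoiding_all_ge:
  fixes x :: real
  assumes "0 \<le> x" "x \<le> 1" "p \<le> x * (1 - x) ^ d"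
  shows "(1 - x) ^ card E * card \<Omega> \<le> card (avoiding \<Omega> A E)"
  using card_avoiding_union_ge[OF finite_outcomes finite_events assms(2), of A "{}"]
    conditional_bound[OF assms] by auto

corollary avoiding_all_nonempty:
  assumes "\<Omega> \<noteq> {}" and "exp 1 * p * (real d + 1) \<le> 1"
  shows "avoiding \<Omega> A E \<noteq> {}"
proof -
  \<comment> \<open>not the usual \<open>1 / (d + 1)\<close>, which would give \<open>x = 1\<close> for \<open>d = 0\<close>\<close>
  define x :: real where "x = 1 / (real d + 2)"
  have "p * (real d + 1) \<le> exp (-1)"
    using assms(2) by (simp add: exp_minus field_simps)
  also have "\<dots> \<le> (1 - x) ^ (d + 1)"
    using exp_minus_one_le_power[of "d + 1"] by (simp add: x_def add.commute)
  finally have "p \<le> (1 - x) ^ (d + 1) / (real d + 1)"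
    by (simp add: field_simps)
  also have "\<dots> = x * (1 - x) ^ d"
  proof -
    have "x = (1 - x) / (real d + 1)"
      by (simp add: x_def divide_simps)
    then show ?thesis
      by (metis mult.commute power_Suc times_divide_eq_right Suc_eq_plus1)
  qed
  finally have "(1 - x) ^ card E * card \<Omega> \<le> card (avoiding \<Omega> A E)"
    by (intro card_avoiding_all_ge) (auto simp: x_def)
  moreover have "0 < (1 - x) ^ card E * card \<Omega>"
    using assms(1) finite_outcomes by (simp add: x_def card_gt_0_iff)
  ultimately show ?thesis
    by fastforce
qed

end

definition monochromatic_colorings :: "'a set \<Rightarrow> ('a \<Rightarrow> 'c) set" where
  "monochromatic_colorings e = {h. \<exists>c. \<forall>v\<in>e. h v = c}"

text \<open>Recolouring \<open>e - {v\<^sub>0}\<close> arbitrarily does not affect the edges of \<open>T\<close>, and when \<open>e\<close> was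
  monochromatic the original colouring can be recovered from the colour of \<open>v\<^sub>0\<close>.\<close>

lemma card_monochromatic_avoiding_le:
  fixes C :: "'c set"
  assumes "finite V" "finite C" "e \<subseteq> V" "v\<^sub>0 \<in> e" "\<forall>f\<in>T. f \<inter> e = {}"
  defines "X \<equiv> avoiding (PiE V (\<lambda>_. C)) monochromatic_colorings T"
  shows "card (X \<inter> monochromatic_colorings e) * card C ^ (card e - 1) \<le> card X"
proof -
  let ?M = "X \<inter> monochromatic_colorings e"
  let ?G = "PiE (e - {v\<^sub>0}) (\<lambda>_. C)"
  define \<Psi> :: "('a \<Rightarrow> 'c) \<times> ('a \<Rightarrow> 'c) \<Rightarrow> 'a \<Rightarrow> 'c"
    where "\<Psi> = (\<lambda>(h, g). override_on h g (e - {v\<^sub>0}))"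
  have "\<Psi> (h, g) \<in> X" if "h \<in> ?M" "g \<in> ?G" for h g
  proof -
    have "\<Psi> (h, g) \<in> PiE V (\<lambda>_. C)"
      using that \<open>e \<subseteq> V\<close> by (auto simp: \<Psi>_def X_def avoiding_def override_on_def PiE_def Pi_def extensional_def)
    moreover have "\<Psi> (h, g) \<notin> monochromatic_colorings f" if "f \<in> T" for f
    proof -
      have "\<forall>v\<in>f. \<Psi> (h, g) v = h v"
        using assms(5) that by (auto simp: \<Psi>_def override_on_def)
      then show ?thesis
        using \<open>h \<in> ?M\<close> \<open>f \<in> T\<close> by (auto simp: X_def avoiding_def monochromatic_colorings_def)
    qed
    ultimately show ?thesis
      by (auto simp: X_def avoiding_def)
  qed
  then have maps: "\<Psi> ` (?M \<times> ?G) \<subseteq> X"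
    by auto
  have "inj_on \<Psi> (?M \<times> ?G)"
  proof (rule inj_onI)
    fix a b assume "a \<in> ?M \<times> ?G" "b \<in> ?M \<times> ?G" and eq: "\<Psi> a = \<Psi> b"
    then obtain h g h' g' where ab: "a = (h, g)" "b = (h', g')"
      and "h \<in> ?M" "g \<in> ?G" "h' \<in> ?M" "g' \<in> ?G"
      by auto
    have pointwise: "override_on h g (e - {v\<^sub>0}) v = override_on h' g' (e - {v\<^sub>0}) v" for v
      using eq by (simp add: \<Psi>_def ab)
    have "h v = h' v" for v
    proof (cases "v \<in> e")
      case True
      have "h v\<^sub>0 = h' v\<^sub>0"
        using pointwise[of v\<^sub>0] by (simp add: override_on_def)
      then show ?thesis
        using True \<open>h \<in> ?M\<close> \<open>h' \<in> ?M\<close> \<open>v\<^sub>0 \<in> e\<close> by (auto simp: monochromatic_colorings_def)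
    next
      case False
      then show ?thesis
        using pointwise[of v] by (simp add: override_on_def)
    qed
    moreover have "g v = g' v" for v
      using pointwise[of v] \<open>g \<in> ?G\<close> \<open>g' \<in> ?G\<close>
      by (cases "v \<in> e - {v\<^sub>0}") (auto simp: override_on_def PiE_def extensional_def)
    ultimately show "a = b"
      using ab by auto
  qed
  moreover have "finite X"
    using assms(1,2) by (auto simp: X_def avoiding_def intro: finite_PiE)
  ultimately have "card (?M \<times> ?G) \<le> card X"
    using maps card_inj_on_le by blast
  moreover have "card ?G = card C ^ (card e - 1)"
    using assms(1,3,4) by (simp add: card_PiE card_Diff_singleton finite_subset)
  ultimately show ?thesis
    by (simp add: card_cartesian_product)
qed

lemma card_meeting_edges_le:
  assumes "finite V" "\<forall>e\<in>E. e \<subseteq> V" "uniform r E" "\<forall>v\<in>V. real (degree E v) \<le> B" "e \<in> E"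
  shows "real (card {f\<in>E. f \<inter> e \<noteq> {}}) \<le> real r * B"
proof -
  have "finite e" "finite E"
    using assms(1,2,5) by (auto intro: rev_finite_subset[of V] rev_finite_subset[of "Pow V"])
  have "card {f\<in>E. f \<inter> e \<noteq> {}} \<le> card (\<Union>v\<in>e. {f\<in>E. v \<in> f})"
    using \<open>finite E\<close> by (intro card_mono) (auto intro: rev_finite_subset)
  also have "\<dots> \<le> (\<Sum>v\<in>e. degree E v)"
    unfolding degree_def using \<open>finite e\<close> by (rule card_UN_le)
  finally have "real (card {f\<in>E. f \<inter> e \<noteq> {}}) \<le> (\<Sum>v\<in>e. real (degree E v))"
    by (metis of_nat_le_iff of_nat_sum)
  also have "\<dots> \<le> (\<Sum>v\<in>e. B)"
    using assms(2,4,5) by (intro sum_mono) auto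
  also have "\<dots> = real r * B"
    using assms(3,5) by (simp add: uniform_def)
  finally show ?thesis .
qed

lemma proper_coloring_if_no_monochromatic_edge:
  assumes "h \<in> PiE V (\<lambda>_. {0..<k})"
    and "\<forall>e\<in>E. e \<subseteq> V \<and> k < card e \<and> h \<notin> monochromatic_colorings e"
  shows "proper_coloring V E h"
  unfolding proper_coloring_def
proof
  fix e assume "e \<in> E"
  then have "e \<subseteq> V" "k < card e" "h \<notin> monochromatic_colorings e"
    using assms(2) by auto
  then have "finite e" "e \<noteq> {}"
    using card_gt_0_iff by fastforce+
  have "card (h ` e) \<le> card {0..<k}"
    using assms(1) \<open>e \<subseteq> V\<close> by (intro card_mono) (auto simp: PiE_def Pi_def)
  moreover have "card (h ` e) \<noteq> 1"
    using \<open>h \<notin> monochromatic_colorings e\<close>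
    by (auto simp: card_1_singleton_iff monochromatic_colorings_def)
  moreover have "card (h ` e) \<noteq> 0"
    using \<open>finite e\<close> \<open>e \<noteq> {}\<close> by simp
  ultimately show "1 < card (h ` e) \<and> card (h ` e) < card e"
    using \<open>k < card e\<close> by simp
qed

lemma colorable_if_few_meeting_edges:
  assumes "finite V" "\<forall>e\<in>E. e \<subseteq> V" "uniform r E" "2 \<le> r"
    and "\<forall>e\<in>E. card {f\<in>E. f \<inter> e \<noteq> {}} \<le> d"
    and "exp 1 * (real d + 1) \<le> (real r - 1) ^ (r - 1)"
  shows "colorable V E"
proof -
  define k where "k = r - 1"
  define \<Omega> :: "('a \<Rightarrow> nat) set" where "\<Omega> = PiE V (\<lambda>_. {0..<k})"
  define p where "p = 1 / real k ^ (r - 1)"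
  have "real k = real r - 1" "0 < k"
    using assms(4) by (auto simp: k_def)
  have card_edge: "card e = r" if "e \<in> E" for e
    using assms(3) that by (simp add: uniform_def)
  interpret counting_local_lemma \<Omega> monochromatic_colorings E "\<lambda>e. {f. f \<inter> e \<noteq> {}}" d p
  proof
    show "finite \<Omega>" "finite E"
      using assms(1,2) by (auto simp: \<Omega>_def intro: finite_PiE rev_finite_subset[of "Pow V"])
    show "card (E \<inter> {f. f \<inter> e \<noteq> {}}) \<le> d" if "e \<in> E" for e
      using assms(5) that by (simp add: Int_def)
    fix e T assume "e \<in> E" "T \<subseteq> E - {f. f \<inter> e \<noteq> {}} - {e}"
    moreover obtain v where "v \<in> e"
      using card_edge[OF \<open>e \<in> E\<close>] assms(4) by fastforce
    ultimately have "card (avoiding \<Omega> monochromatic_colorings T \<inter> monochromatic_colorings e) * k ^ (r - 1)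
        \<le> card (avoiding \<Omega> monochromatic_colorings T)"
      using card_monochromatic_avoiding_le[OF assms(1) _ _ \<open>v \<in> e\<close>, of "{0..<k}" T] assms(2) card_edge
      by (auto simp: \<Omega>_def)
    then show "card (avoiding \<Omega> monochromatic_colorings T \<inter> monochromatic_colorings e)
        \<le> p * card (avoiding \<Omega> monochromatic_colorings T)"
      using \<open>0 < k\<close> by (simp add: p_def field_simps flip: of_nat_mult of_nat_power)
  qed
  have "exp 1 * p * (real d + 1) \<le> 1"
    using assms(4,6) by (simp add: p_def \<open>real k = real r - 1\<close> pos_divide_le_eq mult.commute)
  moreover have "\<Omega> \<noteq> {}"
    using \<open>0 < k\<close> by (auto simp: \<Omega>_def PiE_eq_empty_iff)
  ultimately obtain h where "h \<in> avoiding \<Omega> monochromatic_colorings E"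
    using avoiding_all_nonempty by blast
  then have "proper_coloring V E h"
    using assms(2,4) card_edge by (intro proper_coloring_if_no_monochromatic_edge[of h V k])
      (auto simp: avoiding_def \<Omega>_def k_def)
  then show ?thesis
    by (auto simp: colorable_def)
qed

theorem mainTheorem5:
  fixes V :: "'a set" and E :: "'a set set" and r :: nat
  assumes "r \<ge> 3"
    and "bi_hypergraph V E"
    and "uniform r E"
    and "\<forall>v\<in>V. real (degree E v) \<le> ((real r - 1) ^ (r - 1) * exp (-1) - 2) / real r"
  shows "colorable V E"
proof (cases "E = {}")
  case True
  then show ?thesis
    by (simp add: colorable_def proper_coloring_def)
next
  case False
  define B where "B = ((real r - 1) ^ (r - 1) * exp (-1) - 2) / real r"
  have degree_le: "\<forall>v\<in>V. real (degree E v) \<le> B"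
    using assms(4) by (simp add: B_def)
  have "finite V" and edges: "\<forall>e\<in>E. e \<subseteq> V"
    using assms(2) by (auto simp: bi_hypergraph_def)
  obtain e v where "e \<in> E" "v \<in> e"
    using False assms(1,3) by (fastforce simp: uniform_def)
  \<comment> \<open>so that \<open>nat\<close> does not truncate below\<close>
  then have "0 \<le> B"
    using edges degree_le order_trans[OF of_nat_0_le_iff] by blast
  define d where "d = nat \<lfloor>real r * B\<rfloor>"
  have "card {f\<in>E. f \<inter> e \<noteq> {}} \<le> d" if "e \<in> E" for e
    using card_meeting_edges_le[OF \<open>finite V\<close> edges assms(3) degree_le that]
    by (simp add: d_def le_nat_floor)
  moreover have "exp 1 * (real d + 1) \<le> (real r - 1) ^ (r - 1)"
  proof -
    have "real d \<le> real r * B"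
      using \<open>0 \<le> B\<close> by (simp add: d_def)
    then have "exp 1 * (real d + 1) \<le> exp 1 * (real r * B + 2)"
      by (intro mult_left_mono) auto
    also have "\<dots> = (real r - 1) ^ (r - 1)"
      using assms(1) by (simp add: B_def exp_minus field_simps)
    finally show ?thesis .
  qed
  ultimately show ?thesis
    using colorable_if_few_meeting_edges[OF \<open>finite V\<close> edges assms(3), of d] assms(1) by simp
qed

end
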